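(* Let $l,r>1$ and $p_1,\dots,p_q>1$ be integers, $n=l\,p_1\cdots p_q\, r$, and $A\in\{0,1\}^{n\times n}$. Then $A$ admits all of the factorizations \[ (l,\;p_1p_2\cdots p_q r),\quad (p_1 l,\;p_2\cdots p_q r),\quad\dots,\quad (p_1p_2\cdots p_q l,\; r) \] (i.e. the $(p_1\cdots p_k l,\; p_{k+1}\cdots p_q r)$ factorization for every $k=0,\dots,q$) if and only if $A$ admits an $(l,p_1,p_2,\dots,p_q,r)$ factorization.
   Context: Kronecker products of binary matrices use Boolean arithmetic ($1+1=1$). For positive integers $n_1,\dots,n_m$ with $\prod n_i=n$, an $(n_1,\dots,n_m)$ factorization of $A\in\{0,1\}^{n\times n}$ is an expression $A=A_1\otimes\cdots\otimes A_m$ with $A_i\in\{0,1\}^{n_i\times n_i}$. *)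

theory Defs
  imports Main
begin

text \<open>Binary matrices are modelled as functions nat => nat => bool; an n x n binary
matrix is such a function of which only the entries with indices < n matter.
Entry True = 1, False = 0.\<close>

type_synonym bmat = "nat \<Rightarrow> nat \<Rightarrow> bool"

text \<open>Boolean Kronecker product of an a x a matrix A with a b x b matrix B
(row/column index of the product: i = i1 * b + i2). Boolean arithmetic:
product of entries is conjunction.\<close>
definition bkron :: "nat \<Rightarrow> bmat \<Rightarrow> bmat \<Rightarrow> bmat" where
  "bkron b A B = (\<lambda>i j. A (i div b) (j div b) \<and> B (i mod b) (j mod b))"

fun bkron_list :: "(nat \<times> bmat) list \<Rightarrow> bmat" where
  "bkron_list [] = (\<lambda>i j. True)"
| "bkron_list ((s, M) # rest) = bkron (prod_list (map fst rest)) M (bkron_list rest)"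

definition has_factorization :: "bmat \<Rightarrow> nat list \<Rightarrow> bool" where
  "has_factorization A ns =
     (\<exists>Ms :: bmat list. length Ms = length ns \<and>
        (\<forall>i < prod_list ns. \<forall>j < prod_list ns. A i j = bkron_list (zip ns Ms) i j))"

end

theory Submission
  imports Defs
begin

text \<open>Grouping consecutive factors of an \<open>(l, p\<^sub>1, \<dots>, p\<^sub>q, r)\<close> factorization
yields every two-factor one, since the Kronecker product is associative. Conversely, induct
on the number of factors: the first cut writes \<open>A = B \<otimes> C\<close>. If \<open>B = 0\<close> any \<open>C\<close> will
do; otherwise some entry \<open>B\<^sub>u\<^sub>v = 1\<close> makes \<open>C\<close> the \<open>(u, v)\<close> block of \<open>A\<close>. Each later
cut \<open>A = D \<otimes> E\<close> turns that block into \<open>D' \<otimes> E\<close>, with \<open>D'\<close> the \<open>(u, v)\<close> block of \<open>D\<close>,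
so the block inherits all cuts of the remaining factors.\<close>

definition bmat_eq :: "nat \<Rightarrow> bmat \<Rightarrow> bmat \<Rightarrow> bool" where
  "bmat_eq n A B \<longleftrightarrow> (\<forall>i < n. \<forall>j < n. A i j = B i j)"

lemma bmat_eq_trans: "bmat_eq n A B \<Longrightarrow> bmat_eq n B C \<Longrightarrow> bmat_eq n A C"
  by (simp add: bmat_eq_def)

lemma has_factorization_iff_bmat_eq:
  "has_factorization A ns \<longleftrightarrow>
     (\<exists>Ms. length Ms = length ns \<and> bmat_eq (prod_list ns) A (bkron_list (zip ns Ms)))"
  by (simp add: has_factorization_def bmat_eq_def)

lemma bkron_assoc: "bkron (p * q) A (bkron q B C) = bkron q (bkron p A B) C"
proof -
  have "i mod (p * q) div q = i div q mod p" for i :: nat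
    by (cases "q = 0") (simp_all add: mult.commute[of p q] mod_mult2_eq)
  then show ?thesis
    by (simp add: bkron_def mult.commute[of p q] div_mult2_eq mod_mod_cancel)
qed

lemma bkron_cong:
  assumes "bmat_eq q B B'"
  shows "bmat_eq (p * q) (bkron q A B) (bkron q A B')"
proof -
  have "i mod q < q" if "i < p * q" for i
    using that by (cases "q = 0") simp_all
  then show ?thesis
    using assms by (simp add: bmat_eq_def bkron_def)
qed

lemma bkron_list_append:
  assumes "length Mx = length xs" and "length My = length ys"
  shows "bmat_eq (prod_list xs * prod_list ys) (bkron_list (zip (xs @ ys) (Mx @ My)))
           (bkron (prod_list ys) (bkron_list (zip xs Mx)) (bkron_list (zip ys My)))"
  using assms(1)
proof (induction xs arbitrary: Mx)
  case Nil
  then show ?case by (simp add: bmat_eq_def bkron_def)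
next
  case (Cons x xs)
  then obtain M Mx' where Mx: "Mx = M # Mx'" and len: "length Mx' = length xs"
    by (cases Mx) auto
  have "bmat_eq (x * (prod_list xs * prod_list ys))
          (bkron (prod_list xs * prod_list ys) M (bkron_list (zip (xs @ ys) (Mx' @ My))))
          (bkron (prod_list xs * prod_list ys) M
             (bkron (prod_list ys) (bkron_list (zip xs Mx')) (bkron_list (zip ys My))))"
    using bkron_cong Cons.IH[OF len] by blast
  then show ?case
    using len assms(2) by (simp add: Mx bkron_assoc mult.assoc)
qed

lemma has_factorization_two:
  "has_factorization A [a, b] \<longleftrightarrow> (\<exists>B C. bmat_eq (a * b) A (bkron b B C))"
proof -
  have "(\<exists>Ms. length Ms = Suc (Suc 0) \<and> P Ms) \<longleftrightarrow> (\<exists>B C. P [B, C])" for P :: "bmat list \<Rightarrow> bool"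
    by (auto simp: length_Suc_conv)
  then show ?thesis
    by (simp add: has_factorization_iff_bmat_eq bkron_def)
qed

lemma has_factorization_Cons:
  assumes "bmat_eq (a * prod_list ns) A (bkron (prod_list ns) B C)"
    and "has_factorization C ns"
  shows "has_factorization A (a # ns)"
proof -
  obtain Ms where len: "length Ms = length ns"
    and C: "bmat_eq (prod_list ns) C (bkron_list (zip ns Ms))"
    using assms(2) by (auto simp: has_factorization_iff_bmat_eq)
  have "bmat_eq (a * prod_list ns) A (bkron_list (zip (a # ns) (B # Ms)))"
    using bmat_eq_trans[OF assms(1) bkron_cong[OF C]] len by simp
  then show ?thesis
    using len by (auto simp: has_factorization_iff_bmat_eq intro!: exI[of _ "B # Ms"])
qed

lemma has_factorization_append_cut:
  assumes "has_factorization A (xs @ ys)"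
  shows "has_factorization A [prod_list xs, prod_list ys]"
proof -
  obtain Ms where len: "length Ms = length (xs @ ys)"
    and A: "bmat_eq (prod_list xs * prod_list ys) A (bkron_list (zip (xs @ ys) Ms))"
    using assms by (auto simp: has_factorization_iff_bmat_eq)
  define Mx where "Mx = take (length xs) Ms"
  define My where "My = drop (length xs) Ms"
  have "Ms = Mx @ My" "length Mx = length xs" "length My = length ys"
    using len by (simp_all add: Mx_def My_def)
  then show ?thesis
    using bmat_eq_trans[OF A] bkron_list_append has_factorization_two by metis
qed

definition bblock :: "nat \<Rightarrow> nat \<Rightarrow> nat \<Rightarrow> bmat \<Rightarrow> bmat" where
  "bblock p u v A = (\<lambda>x y. A (u * p + x) (v * p + y))"

lemma bmat_eq_bblock:
  assumes "bmat_eq (a * p) A B" and "u < a" and "v < a"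
  shows "bmat_eq p (bblock p u v A) (bblock p u v B)"
proof -
  have "u * p + x < a * p" if "u < a" "x < p" for u x
  proof -
    have "u * p + x < (u + 1) * p" using that by simp
    also have "\<dots> \<le> a * p" using that by (intro mult_right_mono) auto
    finally show ?thesis .
  qed
  then show ?thesis
    using assms by (simp add: bmat_eq_def bblock_def)
qed

lemma bblock_bkron_nonzero: "B u v \<Longrightarrow> bmat_eq p (bblock p u v (bkron p B C)) C"
  by (simp add: bmat_eq_def bblock_def bkron_def)

lemma bblock_bkron: "bmat_eq (m * e) (bblock (m * e) u v (bkron e D E)) (bkron e (bblock m u v D) E)"
  by (cases "e = 0") (simp_all add: bmat_eq_def bblock_def bkron_def algebra_simps)

lemma has_factorization_bblock:
  assumes "has_factorization A [a * m, e]" and "u < a" and "v < a"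
  shows "has_factorization (bblock (m * e) u v A) [m, e]"
proof -
  obtain D E where "bmat_eq (a * (m * e)) A (bkron e D E)"
    using assms(1) by (auto simp: has_factorization_two mult.assoc)
  then have "bmat_eq (m * e) (bblock (m * e) u v A) (bkron e (bblock m u v D) E)"
    using bmat_eq_trans bmat_eq_bblock[OF _ assms(2,3)] bblock_bkron by blast
  then show ?thesis
    by (auto simp: has_factorization_two)
qed

lemma has_factorization_if_all_cuts:
  assumes "ns \<noteq> []"
    and "\<And>k. 0 < k \<Longrightarrow> k < length ns \<Longrightarrow>
           has_factorization A [prod_list (take k ns), prod_list (drop k ns)]"
  shows "has_factorization A ns"
  using assms
proof (induction ns arbitrary: A)
  case Nil
  then show ?case by simp
next
  case (Cons a ns)
  show ?case
  proof (cases "ns = []")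
    case True
    show ?thesis
      by (auto simp: True has_factorization_def bkron_def intro!: exI[of _ "[A]"])
  next
    case False
    define p where "p = prod_list ns"
    obtain B C where A: "bmat_eq (a * p) A (bkron p B C)"
      using Cons.prems(2)[of 1] False by (auto simp: p_def has_factorization_two)
    show ?thesis
    proof (cases "\<exists>u < a. \<exists>v < a. B u v")
      case True
      then obtain u v where uv: "u < a" "v < a" and "B u v" by blast
      have "bmat_eq p C (bblock p u v A)"
        using bmat_eq_bblock[OF A uv] bblock_bkron_nonzero[where B = B, OF \<open>B u v\<close>]
        by (simp add: bmat_eq_def)
      then have "bmat_eq (a * p) A (bkron p B (bblock p u v A))"
        using A bkron_cong bmat_eq_trans by blast
      moreover have "has_factorization (bblock p u v A) ns"
      proof (rule Cons.IH[OF False])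
        fix k assume "0 < k" "k < length ns"
        define m where "m = prod_list (take k ns)"
        define e where "e = prod_list (drop k ns)"
        have "p = m * e"
          by (metis append_take_drop_id p_def m_def e_def prod_list.append)
        moreover have "has_factorization A [a * m, e]"
          using Cons.prems(2)[of "Suc k"] \<open>k < length ns\<close> by (simp add: m_def e_def)
        ultimately show "has_factorization (bblock p u v A) [m, e]"
          using has_factorization_bblock uv by blast
      qed
      ultimately show ?thesis
        by (simp add: has_factorization_Cons p_def)
    next
      case False
      \<comment> \<open>\<open>A\<close> vanishes on its range, so any factorizable \<open>C'\<close> works\<close>
      define C' where "C' = bkron_list (zip ns (replicate (length ns) B))"
      have "bmat_eq (a * p) A (bkron p B C')"
        using A False by (auto simp: bmat_eq_def bkron_def less_mult_imp_div_less)
      moreover have "has_factorization C' ns"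
        unfolding C'_def has_factorization_def
        by (intro exI[of _ "replicate (length ns) B"]) simp
      ultimately show ?thesis
        by (simp add: has_factorization_Cons p_def)
    qed
  qed
qed

theorem corollary2:
  fixes l r :: nat and ps :: "nat list" and A :: bmat
  assumes "l > 1" and "r > 1" and "ps \<noteq> []" and "\<forall>p \<in> set ps. p > 1"
  shows "(\<forall>k \<le> length ps.
            has_factorization A [prod_list (take k ps) * l, prod_list (drop k ps) * r])
         \<longleftrightarrow> has_factorization A ([l] @ ps @ [r])"
proof
  assume cuts: "\<forall>k \<le> length ps.
    has_factorization A [prod_list (take k ps) * l, prod_list (drop k ps) * r]"
  show "has_factorization A ([l] @ ps @ [r])"
  proof (rule has_factorization_if_all_cuts)
    fix k assume "0 < k" "k < length ([l] @ ps @ [r])"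
    then obtain k' where "k = Suc k'" "k' \<le> length ps"
      by (cases k) auto
    then show "has_factorization A
        [prod_list (take k ([l] @ ps @ [r])), prod_list (drop k ([l] @ ps @ [r]))]"
      using cuts by (simp add: mult.commute)
  qed simp
next
  assume "has_factorization A ([l] @ ps @ [r])"
  then have "has_factorization A [prod_list (l # take k ps), prod_list (drop k ps @ [r])]"
    if "k \<le> length ps" for k
    using has_factorization_append_cut[of A "l # take k ps" "drop k ps @ [r]"]
    by (metis append_Cons append_Nil append_assoc append_take_drop_id)
  then show "\<forall>k \<le> length ps.
      has_factorization A [prod_list (take k ps) * l, prod_list (drop k ps) * r]"
    by (simp add: mult.commute)
qed

end
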